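(* Let $\alpha,\beta>1$ with $\alpha+\beta\leqslant4$, let $V,W$ satisfy (H1)–(H2), and let $T=\sqrt{\frac{2(\alpha+\beta)(D+1)}{\alpha+\beta-2}}$. Then there exists $b_*\in(0,b^* )$ such that for any $\lambda\geqslant1$ and any $b_1,b_2>0$ with $b_1+b_2\in(0,b_* )$, if $\{z_n\}\subset E_\lambda$ is a $(\mathrm{PS})_{c^T_{\mathbf b,\lambda}}$ sequence of $\mathcal{J}^T_{\mathbf b,\lambda}$ (i.e. $\mathcal{J}^T_{\mathbf b,\lambda}(z_n)\to c^T_{\mathbf b,\lambda}$ and $\|(\mathcal{J}^T_{\mathbf b,\lambda})'(z_n)\|_{E_\lambda^*}\to0$), then, up to a subsequence, $\|z_n\|_\lambda\leqslant T$.
   Context: (H1) $V,W\in C(\mathbb{R}^3,[0,\infty))$; $\Omega_1=\operatorname{int}V^{-1}(0)$, $\Omega_2=\operatorname{int}W^{-1}(0)$ have smooth boundaries, $\overline{\Omega}_1=V^{-1}(0)$, $\overline{\Omega}_2=W^{-1}(0)$, $\Omega_1\cap\Omega_2\neq\emptyset$. (H2) There is $c>0$ with $\{x: V(x)W(x)\leqslant c^2\}$ of finite positive Lebesgue measure. $E=E_V\times E_W$, $E_V=\{u\in\mathcal{D}^{1,2}(\mathbb{R}^3):\int Vu^2<\infty\}$, $E_W$ analogous; $E_\lambda$ is $E$ with norm $\|z\|_\lambda^2=\int(|\nabla u|^2+|\nabla v|^2+\lambda Vu^2+\lambda Wv^2)$. $\mathcal{J}^T_{\mathbf b,\lambda}(z)=\frac12\|z\|_\lambda^2+\frac14\xi(\|z\|_\lambda^2/T^2)(b_1\|\nabla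 u\|_2^4+b_2\|\nabla v\|_2^4)-\frac{1}{\alpha+\beta}\int|u^+|^\alpha|v^+|^\beta dx$, with $\xi\in C^\infty([0,\infty),[0,1])$, $\xi=1$ on $[0,1]$, $\xi=0$ on $[2,\infty)$, $\xi'\leqslant0$, $\|\xi'\|_\infty\leqslant2$. $e_0\in C_0^\infty(\Omega_1\cap\Omega_2)$ with $e_0^+\not\equiv0$ and $b^*>0$ are such that $\mathcal{J}^T_{\mathbf b,\lambda}((e_0,e_0))<0$ for all $T,\lambda>0$ and $b_1+b_2\in(0,b^* )$; $c^T_{\mathbf b,\lambda}=\inf_{\gamma\in\Gamma}\max_{t\in[0,1]}\mathcal{J}^T_{\mathbf b,\lambda}(\gamma(t))$ with $\Gamma=\{\gamma\in C([0,1],E_\lambda):\gamma(0)=0,\gamma(1)=(e_0,e_0)\}$. $D>0$ is a constant, independent of $b_1,b_2,T,\lambda$, with $c^T_{\mathbf b,\lambda}\leqslant D$ for all $\lambda\geqslant1$, $T>0$, $b_1+b_2\in(0,b^* )$. *)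

theory Defs
  imports "HOL-Analysis.Analysis"
begin

type_synonym pt = "real^3"
type_synonym fn3 = "pt \<Rightarrow> real"
type_synonym pairfn = "fn3 \<times> fn3"

definition partial :: "3 \<Rightarrow> fn3 \<Rightarrow> fn3" where
  "partial i f x = deriv (\<lambda>t. f (x + t *\<^sub>R axis i 1)) 0"

definition smooth3 :: "fn3 \<Rightarrow> bool" where
  "smooth3 f \<longleftrightarrow> (\<exists>Df :: 3 list \<Rightarrow> fn3. Df [] = f \<and>
      (\<forall>is. continuous_on UNIV (Df is)) \<and>
      (\<forall>is i x. ((\<lambda>t. Df is (x + t *\<^sub>R axis i 1)) has_real_derivative Df (i # is) x) (at 0)))"

definition smooth_real_on_with :: "real set \<Rightarrow> (real \<Rightarrow> real) \<Rightarrow> (nat \<Rightarrow> real \<Rightarrow> real) \<Rightarrow> bool" where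
  "smooth_real_on_with S f F \<longleftrightarrow> F 0 = f \<and>
      (\<forall>k. \<forall>x\<in>S. (F k has_real_derivative F (Suc k) x) (at x within S))"

definition test_fn :: "pt set \<Rightarrow> fn3 \<Rightarrow> bool" where
  "test_fn \<Omega> \<phi> \<longleftrightarrow> smooth3 \<phi> \<and> compact (closure {x. \<phi> x \<noteq> 0}) \<and>
      closure {x. \<phi> x \<noteq> 0} \<subseteq> \<Omega>"

definition smooth_boundary :: "pt set \<Rightarrow> bool" where
  "smooth_boundary \<Omega> \<longleftrightarrow> open \<Omega> \<and>
     (\<forall>p\<in>frontier \<Omega>. \<exists>U \<psi>. open U \<and> p \<in> U \<and> smooth3 \<psi> \<and>
        (\<forall>x\<in>U. \<exists>i. partial i \<psi> x \<noteq> 0) \<and> \<Omega> \<inter> U = {x\<in>U. \<psi> x < 0})"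

definition Lp6 :: "fn3 \<Rightarrow> bool" where
  "Lp6 u \<longleftrightarrow> u \<in> borel_measurable lebesgue \<and> integrable lebesgue (\<lambda>x. \<bar>u x\<bar> powr 6)"

definition weak_grad :: "fn3 \<Rightarrow> (pt \<Rightarrow> real^3) \<Rightarrow> bool" where
  "weak_grad u g \<longleftrightarrow> g \<in> borel_measurable lebesgue \<and>
     integrable lebesgue (\<lambda>x. (norm (g x))\<^sup>2) \<and>
     (\<forall>\<phi> i. test_fn UNIV \<phi> \<longrightarrow>
        integral\<^sup>L lebesgue (\<lambda>x. u x * partial i \<phi> x) = - integral\<^sup>L lebesgue (\<lambda>x. g x $ i * \<phi> x))"

text \<open>D^{1,2}(R^3) = {u in L^6 : weak gradient in L^2} (functions, not a.e.-classes).\<close>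
definition D12 :: "fn3 set" where
  "D12 = {u. Lp6 u \<and> (\<exists>g. weak_grad u g)}"

definition grad :: "fn3 \<Rightarrow> pt \<Rightarrow> real^3" where
  "grad u = (SOME g. weak_grad u g)"

definition dir :: "fn3 \<Rightarrow> real" where
  "dir u = integral\<^sup>L lebesgue (\<lambda>x. (norm (grad u x))\<^sup>2)"

definition EV :: "fn3 \<Rightarrow> fn3 set" where
  "EV V = {u \<in> D12. integrable lebesgue (\<lambda>x. V x * (u x)\<^sup>2)}"

definition EE :: "fn3 \<Rightarrow> fn3 \<Rightarrow> pairfn set" where
  "EE V W = EV V \<times> EV W"

definition lnorm :: "fn3 \<Rightarrow> fn3 \<Rightarrow> real \<Rightarrow> pairfn \<Rightarrow> real" where
  "lnorm V W lam z = sqrt (dir (fst z) + dir (snd z)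
      + lam * integral\<^sup>L lebesgue (\<lambda>x. V x * (fst z x)\<^sup>2)
      + lam * integral\<^sup>L lebesgue (\<lambda>x. W x * (snd z x)\<^sup>2))"

definition zadd :: "pairfn \<Rightarrow> pairfn \<Rightarrow> pairfn" where
  "zadd z w = ((\<lambda>x. fst z x + fst w x), (\<lambda>x. snd z x + snd w x))"

definition zscale :: "real \<Rightarrow> pairfn \<Rightarrow> pairfn" where
  "zscale c z = ((\<lambda>x. c * fst z x), (\<lambda>x. c * snd z x))"

definition zzero :: pairfn where
  "zzero = ((\<lambda>x. 0), (\<lambda>x. 0))"

definition JT :: "(real \<Rightarrow> real) \<Rightarrow> real \<Rightarrow> real \<Rightarrow> fn3 \<Rightarrow> fn3 \<Rightarrow> real \<Rightarrow> real \<Rightarrow> real \<Rightarrow> real \<Rightarrow> pairfn \<Rightarrow> real" where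
  "JT \<xi> \<alpha> \<beta> V W T b1 b2 lam z =
     1/2 * (lnorm V W lam z)\<^sup>2
     + 1/4 * \<xi> ((lnorm V W lam z)\<^sup>2 / T\<^sup>2) * (b1 * (dir (fst z))\<^sup>2 + b2 * (dir (snd z))\<^sup>2)
     - 1 / (\<alpha> + \<beta>) * integral\<^sup>L lebesgue
         (\<lambda>x. (max (fst z x) 0) powr \<alpha> * (max (snd z x) 0) powr \<beta>)"

definition cT :: "(real \<Rightarrow> real) \<Rightarrow> real \<Rightarrow> real \<Rightarrow> fn3 \<Rightarrow> fn3 \<Rightarrow> fn3 \<Rightarrow> real \<Rightarrow> real \<Rightarrow> real \<Rightarrow> real \<Rightarrow> real" where
  "cT \<xi> \<alpha> \<beta> V W e0 T b1 b2 lam =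
     (INF \<gamma> \<in> {\<gamma>. (\<forall>t\<in>{0..1}. \<gamma> t \<in> EE V W) \<and>
                 (\<forall>t\<in>{0..1}. \<forall>\<epsilon>>0. \<exists>\<delta>>0. \<forall>s\<in>{0..1}. \<bar>s - t\<bar> < \<delta> \<longrightarrow>
                      lnorm V W lam (zadd (\<gamma> s) (zscale (-1) (\<gamma> t))) < \<epsilon>) \<and>
                 \<gamma> 0 = zzero \<and> \<gamma> 1 = (e0, e0)}.
        (SUP t \<in> {0..1::real}. JT \<xi> \<alpha> \<beta> V W T b1 b2 lam (\<gamma> t)))"

definition is_frechet_deriv :: "fn3 \<Rightarrow> fn3 \<Rightarrow> real \<Rightarrow> (pairfn \<Rightarrow> real) \<Rightarrow> pairfn \<Rightarrow> (pairfn \<Rightarrow> real) \<Rightarrow> bool" where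
  "is_frechet_deriv V W lam J z L \<longleftrightarrow>
     (\<forall>w1\<in>EE V W. \<forall>w2\<in>EE V W. L (zadd w1 w2) = L w1 + L w2) \<and>
     (\<forall>w\<in>EE V W. \<forall>c. L (zscale c w) = c * L w) \<and>
     (\<exists>K. \<forall>w\<in>EE V W. \<bar>L w\<bar> \<le> K * lnorm V W lam w) \<and>
     (\<forall>\<epsilon>>0. \<exists>\<delta>>0. \<forall>w\<in>EE V W. lnorm V W lam w < \<delta> \<longrightarrow>
         \<bar>J (zadd z w) - J z - L w\<bar> \<le> \<epsilon> * lnorm V W lam w)"

definition dual_norm :: "fn3 \<Rightarrow> fn3 \<Rightarrow> real \<Rightarrow> (pairfn \<Rightarrow> real) \<Rightarrow> real" where
  "dual_norm V W lam L = (SUP w \<in> {w \<in> EE V W. lnorm V W lam w \<le> 1}. \<bar>L w\<bar>)"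

definition PS_seq :: "fn3 \<Rightarrow> fn3 \<Rightarrow> real \<Rightarrow> (pairfn \<Rightarrow> real) \<Rightarrow> real \<Rightarrow> (nat \<Rightarrow> pairfn) \<Rightarrow> bool" where
  "PS_seq V W lam J c z \<longleftrightarrow> (\<forall>n. z n \<in> EE V W) \<and>
     (\<lambda>n. J (z n)) \<longlonglongrightarrow> c \<and>
     (\<exists>L. (\<forall>n. is_frechet_deriv V W lam J (z n) (L n)) \<and>
          (\<lambda>n. dual_norm V W lam (L n)) \<longlonglongrightarrow> 0)"

end

theory Submission
  imports Defs "HOL-Computational_Algebra.Polynomial"
begin

(* Along a ray the functional is explicit: the weak gradient is unique up to null sets
   (smooth bumps converging to indicators of boxes separate L^2 functions), so the Dirichlet
   energy is 2-homogeneous and c |-> J(c z) is an explicit function of c, whose derivative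
   at c = 1 is J'(z) z.  In J(z) - J'(z) z / (alpha + beta) the coupling term cancels, the
   derivative of the cut-off xi contributes a nonnegative term, and the truncated Kirchhoff
   term costs at most 2 (b1 + b2) T^4 because xi vanishes beyond 2 T^2.  Hence
   (1/2 - 1/(alpha + beta)) |z|^2 <= J(z) + |J'(z)| |z| / (alpha + beta) + 2 (b1 + b2) T^4.
   T is chosen so that (1/2 - 1/(alpha + beta)) T^2 = D + 1; once 2 (b1 + b2) T^4 <= 1/4,
   a PS sequence at a level <= D cannot stay outside the ball of radius T. *)

definition smooth_real :: "(real \<Rightarrow> real) \<Rightarrow> bool" where
  "smooth_real f \<longleftrightarrow> (\<exists>F. F 0 = f \<and> (\<forall>n x. (F n has_real_derivative F (Suc n) x) (at x)))"

lemma smooth_real_const: "smooth_real (\<lambda>x. c)"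
  unfolding smooth_real_def by (rule exI[of _ "\<lambda>n x. if n = 0 then c else 0"]) auto

lemma smooth_real_add:
  assumes "smooth_real f" "smooth_real g"
  shows "smooth_real (\<lambda>x. f x + g x)"
proof -
  obtain F where F: "F 0 = f" "\<And>n x. (F n has_real_derivative F (Suc n) x) (at x)"
    using assms(1) unfolding smooth_real_def by blast
  obtain G where G: "G 0 = g" "\<And>n x. (G n has_real_derivative G (Suc n) x) (at x)"
    using assms(2) unfolding smooth_real_def by blast
  show ?thesis unfolding smooth_real_def
    by (rule exI[of _ "\<lambda>n x. F n x + G n x"]) (auto simp: F(1) G(1) intro!: DERIV_add F(2) G(2))
qed

lemma smooth_real_mult:
  assumes "smooth_real f" "smooth_real g"
  shows "smooth_real (\<lambda>x. f x * g x)"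
proof -
  obtain F where F: "F 0 = f" "\<And>n x. (F n has_real_derivative F (Suc n) x) (at x)"
    using assms(1) unfolding smooth_real_def by blast
  obtain G where G: "G 0 = g" "\<And>n x. (G n has_real_derivative G (Suc n) x) (at x)"
    using assms(2) unfolding smooth_real_def by blast
  define H where "H n x = (\<Sum>i = 0..n. real (n choose i) * F i x * G (n - i) x)" for n x
  have "(H n has_real_derivative H (Suc n) x) (at x)" for n x
  proof -
    have Suc_choose: "Suc n choose k = (n choose k) + (if k = 0 then 0 else n choose (k - 1))" for k
      by (cases k) simp_all
    have "(\<Sum>i = 0..n. real (n choose i) * (F (Suc i) x * G (n - i) x + F i x * G (Suc (n - i)) x))
       = H (Suc n) x"
      unfolding H_def
      apply (simp add: Suc_choose algebra_simps sum.distrib)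
      apply (subst (4) sum_Suc_reindex)
      apply (auto simp: algebra_simps Suc_diff_le intro: sum.cong)
      done
    moreover have "(H n has_real_derivative
        (\<Sum>i = 0..n. real (n choose i) * (F (Suc i) x * G (n - i) x + F i x * G (Suc (n - i)) x))) (at x)"
      unfolding H_def
      by (intro DERIV_sum, subst mult.assoc, rule DERIV_cmult,
          rule DERIV_mult[OF F(2) G(2), THEN DERIV_cong]) (simp add: algebra_simps Suc_diff_le)
    ultimately show ?thesis by simp
  qed
  moreover have "H 0 = (\<lambda>x. f x * g x)" by (auto simp: H_def F(1) G(1))
  ultimately show ?thesis unfolding smooth_real_def by blast
qed

lemma smooth_real_power: "smooth_real f \<Longrightarrow> smooth_real (\<lambda>x. f x ^ m)"
  by (induction m) (auto intro: smooth_real_mult smooth_real_const)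

lemma smooth_real_affine:
  assumes "smooth_real f"
  shows "smooth_real (\<lambda>x. f (c * x + a))"
proof -
  obtain F where F: "F 0 = f" "\<And>n x. (F n has_real_derivative F (Suc n) x) (at x)"
    using assms unfolding smooth_real_def by blast
  have "((\<lambda>x. c ^ n * F n (c * x + a)) has_real_derivative c ^ Suc n * F (Suc n) (c * x + a)) (at x)"
    for n x
    by (rule DERIV_cmult[THEN DERIV_cong], rule DERIV_chain2[OF F(2)])
       (auto intro!: derivative_eq_intros)
  then show ?thesis unfolding smooth_real_def
    by (intro exI[of _ "\<lambda>n x. c ^ n * F n (c * x + a)"]) (auto simp: F(1))
qed

(* The derivative of p(1/x) exp(-1/x) is q(1/x) exp(-1/x) with q(y) = y^2 (p(y) - p'(y)). *)

fun flat_poly :: "nat \<Rightarrow> real poly" where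
  "flat_poly 0 = 1"
| "flat_poly (Suc n) = [:0, 0, 1:] * (flat_poly n - pderiv (flat_poly n))"

definition flat_fun :: "nat \<Rightarrow> real \<Rightarrow> real" where
  "flat_fun n x = (if x > 0 then poly (flat_poly n) (inverse x) * exp (- inverse x) else 0)"

lemma flat_fun_0: "flat_fun 0 x = (if x > 0 then exp (- inverse x) else 0)"
  by (simp add: flat_fun_def)

lemma poly_over_exp_tendsto_0: "((\<lambda>t. poly p t / exp t) \<longlongrightarrow> (0::real)) at_top"
proof -
  have "((\<lambda>t. \<Sum>i\<le>degree p. coeff p i * (t ^ i / exp t)) \<longlongrightarrow> (\<Sum>i\<le>degree p. coeff p i * 0)) at_top"
    by (intro tendsto_sum tendsto_mult tendsto_const tendsto_power_div_exp_0)
  then show ?thesis by (simp add: poly_altdef sum_divide_distrib)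
qed

lemma flat_fun_has_real_derivative: "(flat_fun n has_real_derivative flat_fun (Suc n) x) (at x)"
proof -
  consider "x > 0" | "x < 0" | "x = 0" by linarith
  then show ?thesis
  proof cases
    case 1
    have d1: "((\<lambda>x. poly (flat_poly n) (inverse x)) has_real_derivative
        poly (pderiv (flat_poly n)) (inverse x) * (- (inverse x * inverse x))) (at x)"
      by (rule DERIV_chain2[OF poly_DERIV])
         (use 1 in \<open>auto intro!: derivative_eq_intros simp: power2_eq_square\<close>)
    have d2: "((\<lambda>x. exp (- inverse x)) has_real_derivative exp (- inverse x) * (inverse x * inverse x)) (at x)"
      by (rule DERIV_chain2[OF DERIV_exp])
         (use 1 in \<open>auto intro!: derivative_eq_intros simp: power2_eq_square\<close>)
    have "((\<lambda>x. poly (flat_poly n) (inverse x) * exp (- inverse x)) has_real_derivative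
        flat_fun (Suc n) x) (at x)"
      by (rule DERIV_mult[OF d1 d2, THEN DERIV_cong]) (use 1 in \<open>simp add: flat_fun_def algebra_simps\<close>)
    then show ?thesis
      by (rule has_field_derivative_transform_within_open[where S="{0<..}"])
         (use 1 in \<open>auto simp: flat_fun_def\<close>)
  next
    case 2
    have "((\<lambda>x. 0) has_real_derivative flat_fun (Suc n) x) (at x)"
      using 2 by (simp add: flat_fun_def)
    then show ?thesis
      by (rule has_field_derivative_transform_within_open[where S="{..<0}"])
         (use 2 in \<open>auto simp: flat_fun_def\<close>)
  next
    case 3
    have left: "((\<lambda>y. (flat_fun n y - flat_fun n 0) / (y - 0)) \<longlongrightarrow> 0) (at_left 0)"
      by (rule Lim_transform_eventually[OF tendsto_const])
         (auto simp: flat_fun_def eventually_at_left_field intro!: exI[of _ "-1"])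
    have "((\<lambda>t. poly (flat_poly n * [:0, 1:]) t / exp t) \<longlongrightarrow> 0) at_top"
      by (rule poly_over_exp_tendsto_0)
    then have "((\<lambda>y. poly (flat_poly n * [:0, 1:]) (inverse y) / exp (inverse y)) \<longlongrightarrow> 0) (at_right 0)"
      by (rule filterlim_compose[OF _ filterlim_inverse_at_top_right])
    then have right: "((\<lambda>y. (flat_fun n y - flat_fun n 0) / (y - 0)) \<longlongrightarrow> 0) (at_right 0)"
      by (rule Lim_transform_eventually)
         (auto simp: flat_fun_def eventually_at_right_field exp_minus field_simps intro!: exI[of _ 1])
    have "((\<lambda>y. (flat_fun n y - flat_fun n 0) / (y - 0)) \<longlongrightarrow> 0) (at 0)"
      using left right by (simp add: filterlim_split_at_real)
    then show ?thesis using 3 by (simp add: has_field_derivative_iff flat_fun_def)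
  qed
qed

lemma smooth_real_flat_fun: "smooth_real (flat_fun 0)"
  unfolding smooth_real_def using flat_fun_has_real_derivative by blast

lemma smooth3_coordinate_product:
  assumes "\<And>k. smooth_real (p k)"
  shows "smooth3 (\<lambda>x. \<Prod>k\<in>UNIV. p k (x $ k))"
proof -
  have "\<forall>k. \<exists>F. F 0 = p k \<and> (\<forall>n x. (F n has_real_derivative F (Suc n) x) (at x))"
    using assms unfolding smooth_real_def by blast
  then obtain F where F: "\<And>k. F k 0 = p k" "\<And>k n x. (F k n has_real_derivative F k (Suc n) x) (at x)"
    by metis
  define Df where "Df is x = (\<Prod>k\<in>UNIV. F k (count_list is k) (x $ k))" for "is" and x :: pt
  have cont: "continuous_on UNIV (F k n)" for k n
    using F(2) by (metis DERIV_isCont continuous_at_imp_continuous_on)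
  have "continuous_on UNIV (Df is)" for "is"
    unfolding Df_def by (intro continuous_intros continuous_on_compose2[OF cont]) auto
  moreover have "((\<lambda>t. Df is (x + t *\<^sub>R axis i 1)) has_real_derivative Df (i # is) x) (at 0)"
    for "is" i x
  proof -
    let ?rest = "\<Prod>k\<in>UNIV - {i}. F k (count_list is k) (x $ k)"
    have "Df is (x + t *\<^sub>R axis i 1) = F i (count_list is i) (x $ i + t) * ?rest" for t
      unfolding Df_def by (subst prod.remove[of UNIV i]) (auto simp: axis_def intro!: prod.cong)
    moreover have "Df (i # is) x = F i (Suc (count_list is i)) (x $ i) * ?rest"
      unfolding Df_def by (subst prod.remove[of UNIV i]) (auto intro!: prod.cong)
    moreover have "((\<lambda>t. F i (count_list is i) (x $ i + t)) has_real_derivative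
        F i (Suc (count_list is i)) (x $ i)) (at 0)"
      by (rule DERIV_chain2[OF F(2), THEN DERIV_cong]) (auto intro!: derivative_eq_intros)
    ultimately show ?thesis by (simp add: DERIV_cmult_right)
  qed
  moreover have "Df [] = (\<lambda>x. \<Prod>k\<in>UNIV. p k (x $ k))" by (auto simp: Df_def F(1))
  ultimately show ?thesis unfolding smooth3_def by blast
qed

section \<open>Smooth bumps approximating indicators of boxes\<close>

definition interval_bump :: "nat \<Rightarrow> real \<Rightarrow> real \<Rightarrow> real \<Rightarrow> real" where
  "interval_bump m a b x = 1 - (1 - flat_fun 0 (x - a) * flat_fun 0 (b - x)) ^ m"

lemma flat_product_bounds:
  "0 \<le> flat_fun 0 (x - a) * flat_fun 0 (b - x)" "flat_fun 0 (x - a) * flat_fun 0 (b - x) < 1"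
  "0 < flat_fun 0 (x - a) * flat_fun 0 (b - x) \<longleftrightarrow> a < x \<and> x < b"
proof -
  have f: "0 \<le> flat_fun 0 y" "flat_fun 0 y < 1" "0 < flat_fun 0 y \<longleftrightarrow> 0 < y" for y
    by (auto simp: flat_fun_0)
  show "0 \<le> flat_fun 0 (x - a) * flat_fun 0 (b - x)"
    using f by simp
  have "flat_fun 0 (x - a) * flat_fun 0 (b - x) \<le> flat_fun 0 (x - a)"
    using f(1)[of "x - a"] f(2)[of "b - x"] by (simp add: mult_left_le)
  then show "flat_fun 0 (x - a) * flat_fun 0 (b - x) < 1"
    using f(2)[of "x - a"] by linarith
  show "0 < flat_fun 0 (x - a) * flat_fun 0 (b - x) \<longleftrightarrow> a < x \<and> x < b"
    by (auto simp: flat_fun_0)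
qed

lemma smooth_real_interval_bump: "smooth_real (interval_bump m a b)"
proof -
  have "smooth_real (\<lambda>x. flat_fun 0 (1 * x + - a))" "smooth_real (\<lambda>x. flat_fun 0 ((-1) * x + b))"
    by (intro smooth_real_affine smooth_real_flat_fun)+
  then have "smooth_real
      (\<lambda>x. 1 + (-1) * (1 + (-1) * (flat_fun 0 (1 * x + - a) * flat_fun 0 ((-1) * x + b))) ^ m)"
    by (intro smooth_real_add smooth_real_mult smooth_real_const smooth_real_power)
  then show ?thesis unfolding interval_bump_def[abs_def] by simp
qed

lemma interval_bump_bounds: "0 \<le> interval_bump m a b x" "interval_bump m a b x \<le> 1"
  unfolding interval_bump_def using flat_product_bounds(1,2)[of x a b]
  by (auto simp: power_le_one)

lemma interval_bump_outside: "\<not> (a < x \<and> x < b) \<Longrightarrow> interval_bump m a b x = 0"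
  unfolding interval_bump_def by (auto simp: flat_fun_0)

lemma interval_bump_tendsto: "a < x \<Longrightarrow> x < b \<Longrightarrow> (\<lambda>m. interval_bump m a b x) \<longlonglongrightarrow> 1"
proof -
  assume "a < x" "x < b"
  then have "\<bar>1 - flat_fun 0 (x - a) * flat_fun 0 (b - x)\<bar> < 1"
    using flat_product_bounds[of x a b] by simp
  then have "(\<lambda>m. (1 - flat_fun 0 (x - a) * flat_fun 0 (b - x)) ^ m) \<longlonglongrightarrow> 0"
    by (rule LIMSEQ_abs_realpow_zero2)
  then have "(\<lambda>m. 1 - (1 - flat_fun 0 (x - a) * flat_fun 0 (b - x)) ^ m) \<longlonglongrightarrow> 1 - 0"
    by (intro tendsto_diff tendsto_const)
  then show ?thesis by (simp add: interval_bump_def[abs_def])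
qed

definition box_bump :: "nat \<Rightarrow> pt \<Rightarrow> pt \<Rightarrow> pt \<Rightarrow> real" where
  "box_bump m a b x = (\<Prod>k\<in>UNIV. interval_bump m (a $ k) (b $ k) (x $ k))"

lemma box_bump_outside: "x \<notin> box a b \<Longrightarrow> box_bump m a b x = 0"
  unfolding box_bump_def mem_box_cart by (auto intro: interval_bump_outside)

lemma test_fn_box_bump: "test_fn UNIV (box_bump m a b)"
proof -
  have "{x. box_bump m a b x \<noteq> 0} \<subseteq> cbox a b"
    using box_bump_outside box_subset_cbox by blast
  then have "closure {x. box_bump m a b x \<noteq> 0} \<subseteq> cbox a b"
    by (simp add: closure_minimal closed_cbox)
  then have "compact (closure {x. box_bump m a b x \<noteq> 0})"
    by (meson bounded_cbox bounded_subset compact_closure closure_subset)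
  moreover have "smooth3 (box_bump m a b)"
    unfolding box_bump_def[abs_def] by (rule smooth3_coordinate_product[OF smooth_real_interval_bump])
  ultimately show ?thesis unfolding test_fn_def by auto
qed

lemma abs_box_bump_le_indicator: "\<bar>box_bump m a b x\<bar> \<le> indicator (box a b) x"
proof -
  have "0 \<le> box_bump m a b x" "box_bump m a b x \<le> 1"
    unfolding box_bump_def using interval_bump_bounds by (auto intro!: prod_nonneg prod_le_1)
  then show ?thesis using box_bump_outside[of x a b m] by (auto simp: indicator_def)
qed

lemma box_bump_tendsto_indicator: "(\<lambda>m. box_bump m a b x) \<longlonglongrightarrow> indicator (box a b) x"
proof (cases "x \<in> box a b")
  case True
  then have "(\<lambda>m. box_bump m a b x) \<longlonglongrightarrow> (\<Prod>k\<in>(UNIV::3 set). 1)"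
    unfolding box_bump_def mem_box_cart by (intro tendsto_prod interval_bump_tendsto) auto
  then show ?thesis using True by simp
next
  case False
  then show ?thesis by (simp add: box_bump_outside)
qed

section \<open>Test functions separate locally integrable functions\<close>

lemma continuous_on_test_fn: "test_fn S \<phi> \<Longrightarrow> continuous_on UNIV \<phi>"
  unfolding test_fn_def smooth3_def by auto

lemma box_bump_lebesgue_measurable: "box_bump m a b \<in> borel_measurable lebesgue"
  using continuous_on_test_fn[OF test_fn_box_bump]
  by (simp add: borel_measurable_continuous_onI measurable_completion)

lemma integrable_mult_indicator_if_square_integrable:
  fixes h :: "'a \<Rightarrow> real"
  assumes h: "h \<in> borel_measurable M" "integrable M (\<lambda>x. (h x)\<^sup>2)"
    and A: "A \<in> sets M" "emeasure M A < \<infinity>"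
  shows "integrable M (\<lambda>x. h x * indicator A x)"
proof (rule Bochner_Integration.integrable_bound)
  show "integrable M (\<lambda>x. (h x)\<^sup>2 + indicator A x)"
    using h(2) A by (intro Bochner_Integration.integrable_add integrable_real_indicator)
  show "(\<lambda>x. h x * indicator A x) \<in> borel_measurable M"
    using h(1) A(1) by (intro borel_measurable_times borel_measurable_indicator)
  show "AE x in M. norm (h x * indicator A x) \<le> norm ((h x)\<^sup>2 + indicator A x)"
  proof (rule AE_I2)
    fix x
    have "\<bar>h x\<bar> \<le> (h x)\<^sup>2 + 1"
      using zero_le_power2[of "\<bar>h x\<bar> - 1/2"] by (simp add: power2_eq_square algebra_simps)
    then show "norm (h x * indicator A x) \<le> norm ((h x)\<^sup>2 + indicator A x)"
      by (cases "x \<in> A") simp_all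
  qed
qed

lemma integral_box_bump_tendsto:
  fixes f :: "pt \<Rightarrow> real"
  assumes f: "f \<in> borel_measurable lebesgue"
    and int: "integrable lebesgue (\<lambda>x. f x * indicator (box a b) x)"
  shows "(\<lambda>m. \<integral>x. f x * box_bump m a b x \<partial>lebesgue) \<longlonglongrightarrow> (\<integral>x. f x * indicator (box a b) x \<partial>lebesgue)"
proof (rule integral_dominated_convergence[where w="\<lambda>x. \<bar>f x * indicator (box a b) x\<bar>"])
  show "integrable lebesgue (\<lambda>x. \<bar>f x * indicator (box a b) x\<bar>)"
    using int by (rule integrable_abs)
  show "(\<lambda>x. f x * indicator (box a b) x) \<in> borel_measurable lebesgue"
    using int by (rule borel_measurable_integrable)
  show "(\<lambda>x. f x * box_bump m a b x) \<in> borel_measurable lebesgue" for m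
    using f box_bump_lebesgue_measurable by (rule borel_measurable_times)
  show "AE x in lebesgue. (\<lambda>m. f x * box_bump m a b x) \<longlonglongrightarrow> f x * indicator (box a b) x"
    by (intro AE_I2 tendsto_mult tendsto_const box_bump_tendsto_indicator)
  show "AE x in lebesgue. norm (f x * box_bump m a b x) \<le> \<bar>f x * indicator (box a b) x\<bar>" for m
    using abs_box_bump_le_indicator by (auto simp: abs_mult intro!: mult_left_mono)
qed

lemma emeasure_density_pos_part:
  fixes k :: "'a \<Rightarrow> real"
  assumes "k \<in> borel_measurable M" "A \<in> sets M" "integrable M (\<lambda>x. k x * indicator A x)"
  shows "emeasure (density M (\<lambda>x. ennreal (max (k x) 0))) A
    = ennreal (\<integral>x. max (k x * indicator A x) 0 \<partial>M)"
proof -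
  have "emeasure (density M (\<lambda>x. ennreal (max (k x) 0))) A
      = (\<integral>\<^sup>+x. ennreal (max (k x * indicator A x) 0) \<partial>M)"
    using assms(1,2) by (subst emeasure_density) (auto intro!: nn_integral_cong simp: indicator_def)
  then show ?thesis
    using assms(3) by (simp add: nn_integral_eq_integral)
qed

lemma AE_zero_if_box_integrals_zero_lborel:
  fixes k :: "'a::euclidean_space \<Rightarrow> real"
  assumes k: "k \<in> borel_measurable lborel"
    and int: "\<And>a b. integrable lborel (\<lambda>x. k x * indicator (box a b) x)"
    and zero: "\<And>a b. (\<integral>x. k x * indicator (box a b) x \<partial>lborel) = 0"
  shows "AE x in lborel. k x = 0"
proof -
  define M1 where "M1 = density lborel (\<lambda>x. ennreal (max (k x) 0))"
  define M2 where "M2 = density lborel (\<lambda>x. ennreal (max (- k x) 0))"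
  have M1_box: "emeasure M1 (box a b) = ennreal (\<integral>x. max (k x * indicator (box a b) x) 0 \<partial>lborel)"
    and M2_box: "emeasure M2 (box a b) = ennreal (\<integral>x. max (- (k x * indicator (box a b) x)) 0 \<partial>lborel)"
    for a b :: 'a
    using emeasure_density_pos_part[of k lborel "box a b"] int[of a b] k
      emeasure_density_pos_part[of "\<lambda>x. - k x" lborel "box a b"]
    by (simp_all add: M1_def M2_def)
  have "emeasure M1 X = emeasure M2 X" if X: "X \<in> range (\<lambda>(a, b). box a b)" for X
  proof -
    obtain a b where X: "X = box a b"
      using X by auto
    let ?F = "\<lambda>x. k x * indicator (box a b) x"
    have "(\<integral>x. ?F x \<partial>lborel) = (\<integral>x. max (?F x) 0 - max (- ?F x) 0 \<partial>lborel)"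
      by (rule Bochner_Integration.integral_cong) auto
    also have "\<dots> = (\<integral>x. max (?F x) 0 \<partial>lborel) - (\<integral>x. max (- ?F x) 0 \<partial>lborel)"
      using int[of a b] by (intro Bochner_Integration.integral_diff) auto
    finally show ?thesis
      using zero[of a b] by (simp add: X M1_box M2_box)
  qed
  then have "M1 = M2"
    by (intro measure_eqI_generator_eq[where E="range (\<lambda>(a, b). box a b)" and \<Omega>=UNIV
          and A="\<lambda>i. box (- (real i *\<^sub>R One)) (real i *\<^sub>R One)"])
       (auto simp: Int_stable_def box_Int_box M1_def M2_def borel_eq_box sets_measure_of
          M1_box[unfolded M1_def] UN_box_eq_UNIV)
  then have "AE x in lborel. ennreal (max (k x) 0) = ennreal (max (- k x) 0)"
    unfolding M1_def M2_def using k
    by (intro sigma_finite_measure.density_unique[OF sigma_finite_lborel]) auto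
  then show ?thesis
    by eventually_elim (auto simp: max_def split: if_splits)
qed

lemma AE_zero_if_box_integrals_zero:
  fixes h :: "'a::euclidean_space \<Rightarrow> real"
  assumes h: "h \<in> borel_measurable lebesgue"
    and int: "\<And>a b. integrable lebesgue (\<lambda>x. h x * indicator (box a b) x)"
    and zero: "\<And>a b. (\<integral>x. h x * indicator (box a b) x \<partial>lebesgue) = 0"
  shows "AE x in lebesgue. h x = 0"
proof -
  obtain h' where [measurable]: "h' \<in> borel_measurable lborel" and h_h': "AE x in lborel. h x = h' x"
    using completion_ex_borel_measurable_real[OF h] by blast
  have "integrable lborel (\<lambda>x. h' x * indicator (box a b) x)
      \<and> (\<integral>x. h' x * indicator (box a b) x \<partial>lborel) = 0" for a b :: 'a
  proof -
    have m: "(\<lambda>x. h' x * indicator (box a b) x) \<in> borel_measurable lborel"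
      by measurable
    have m': "(\<lambda>x. h x * indicator (box a b) x) \<in> borel_measurable lebesgue"
      using int[of a b] by (rule borel_measurable_integrable)
    have ae: "AE x in lebesgue. h x * indicator (box a b) x = h' x * indicator (box a b) x"
      using AE_completion[OF h_h'] by eventually_elim simp
    have "integrable lebesgue (\<lambda>x. h' x * indicator (box a b) x)"
      using integrable_cong_AE[OF m' measurable_completion[OF m] ae] int[of a b] by simp
    moreover have "(\<integral>x. h' x * indicator (box a b) x \<partial>lebesgue) = 0"
      using integral_cong_AE[OF m' measurable_completion[OF m] ae] zero[of a b] by simp
    ultimately show ?thesis
      using m by (simp add: integrable_completion integral_completion)
  qed
  then have "AE x in lborel. h' x = 0"
    by (intro AE_zero_if_box_integrals_zero_lborel) auto
  then have "AE x in lborel. h x = 0"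
    using h_h' by eventually_elim simp
  then show ?thesis
    by (rule AE_completion)
qed

lemma AE_eq_if_test_fn_integrals_eq:
  fixes f g :: "pt \<Rightarrow> real"
  assumes f: "f \<in> borel_measurable lebesgue" "\<And>a b. integrable lebesgue (\<lambda>x. f x * indicator (box a b) x)"
    and g: "g \<in> borel_measurable lebesgue" "\<And>a b. integrable lebesgue (\<lambda>x. g x * indicator (box a b) x)"
    and eq: "\<And>\<phi>. test_fn UNIV \<phi> \<Longrightarrow> (\<integral>x. f x * \<phi> x \<partial>lebesgue) = (\<integral>x. g x * \<phi> x \<partial>lebesgue)"
  shows "AE x in lebesgue. f x = g x"
proof -
  have "(\<integral>x. f x * indicator (box a b) x \<partial>lebesgue) = (\<integral>x. g x * indicator (box a b) x \<partial>lebesgue)"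
    for a b
  proof (rule LIMSEQ_unique)
    show "(\<lambda>m. \<integral>x. f x * box_bump m a b x \<partial>lebesgue) \<longlonglongrightarrow> (\<integral>x. f x * indicator (box a b) x \<partial>lebesgue)"
      using f by (rule integral_box_bump_tendsto)
    show "(\<lambda>m. \<integral>x. f x * box_bump m a b x \<partial>lebesgue) \<longlonglongrightarrow> (\<integral>x. g x * indicator (box a b) x \<partial>lebesgue)"
      using integral_box_bump_tendsto[OF g] by (simp add: eq[OF test_fn_box_bump])
  qed
  then have "AE x in lebesgue. f x - g x = 0"
  proof (intro AE_zero_if_box_integrals_zero)
    show "(\<lambda>x. f x - g x) \<in> borel_measurable lebesgue"
      using f(1) g(1) by (rule borel_measurable_diff)
    show "integrable lebesgue (\<lambda>x. (f x - g x) * indicator (box a b) x)" for a b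
      using Bochner_Integration.integrable_diff[OF f(2) g(2)] by (simp add: left_diff_distrib)
  qed (simp add: left_diff_distrib Bochner_Integration.integral_diff[OF f(2) g(2)])
  then show ?thesis by auto
qed

lemma weak_grad_scale:
  assumes "weak_grad u g"
  shows "weak_grad (\<lambda>x. c * u x) (\<lambda>x. c *\<^sub>R g x)"
proof -
  have [measurable]: "g \<in> borel_measurable lebesgue" and gi: "integrable lebesgue (\<lambda>x. (norm (g x))\<^sup>2)"
    and parts: "\<And>\<phi> i. test_fn UNIV \<phi> \<Longrightarrow>
        (\<integral>x. u x * partial i \<phi> x \<partial>lebesgue) = - (\<integral>x. g x $ i * \<phi> x \<partial>lebesgue)"
    using assms unfolding weak_grad_def by auto
  have "integrable lebesgue (\<lambda>x. (norm (c *\<^sub>R g x))\<^sup>2)"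
    using integrable_mult_left[OF gi, of "c\<^sup>2"] by (simp add: power_mult_distrib)
  moreover have "(\<integral>x. c * u x * partial i \<phi> x \<partial>lebesgue) = - (\<integral>x. (c *\<^sub>R g x) $ i * \<phi> x \<partial>lebesgue)"
    if "test_fn UNIV \<phi>" for \<phi> i
    using parts[OF that, of i] by (simp add: mult.assoc)
  ultimately show ?thesis
    unfolding weak_grad_def by simp
qed

lemma square_integrable_component:
  fixes g :: "pt \<Rightarrow> real^3"
  assumes g: "g \<in> borel_measurable lebesgue" "integrable lebesgue (\<lambda>x. (norm (g x))\<^sup>2)"
  shows "(\<lambda>x. g x $ i) \<in> borel_measurable lebesgue" "integrable lebesgue (\<lambda>x. (g x $ i)\<^sup>2)"
proof -
  have "(\<lambda>v::real^3. v $ i) \<in> borel_measurable borel"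
    by (intro borel_measurable_continuous_onI continuous_intros)
  from measurable_compose[OF g(1) this]
  show m: "(\<lambda>x. g x $ i) \<in> borel_measurable lebesgue"
    by (simp add: comp_def)
  show "integrable lebesgue (\<lambda>x. (g x $ i)\<^sup>2)"
  proof (rule Bochner_Integration.integrable_bound[OF g(2)])
    show "(\<lambda>x. (g x $ i)\<^sup>2) \<in> borel_measurable lebesgue"
      using m by measurable
    have "\<bar>g x $ i\<bar>\<^sup>2 \<le> (norm (g x))\<^sup>2" for x
      by (rule power_mono[OF component_le_norm_cart]) simp
    then show "AE x in lebesgue. norm ((g x $ i)\<^sup>2) \<le> norm ((norm (g x))\<^sup>2)"
      by simp
  qed
qed

lemma weak_grad_component_locally_integrable:
  assumes "weak_grad u g"
  shows "(\<lambda>x. g x $ i) \<in> borel_measurable lebesgue"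
    "integrable lebesgue (\<lambda>x. g x $ i * indicator (box a b) x)"
proof -
  have "g \<in> borel_measurable lebesgue" "integrable lebesgue (\<lambda>x. (norm (g x))\<^sup>2)"
    using assms unfolding weak_grad_def by auto
  note component = square_integrable_component[OF this, of i]
  then show "(\<lambda>x. g x $ i) \<in> borel_measurable lebesgue" by blast
  have "box a b \<in> sets lebesgue" "emeasure lebesgue (box a b) < \<infinity>"
    using lmeasurable_box[of a b] by (auto simp: fmeasurable_def)
  then show "integrable lebesgue (\<lambda>x. g x $ i * indicator (box a b) x)"
    by (rule integrable_mult_indicator_if_square_integrable[OF component])
qed

lemma weak_grad_unique:
  assumes g1: "weak_grad u g1" and g2: "weak_grad u g2"
  shows "AE x in lebesgue. g1 x = g2 x"
proof -
  have "AE x in lebesgue. g1 x $ i = g2 x $ i" for i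
  proof (rule AE_eq_if_test_fn_integrals_eq)
    show "(\<integral>x. g1 x $ i * \<phi> x \<partial>lebesgue) = (\<integral>x. g2 x $ i * \<phi> x \<partial>lebesgue)"
      if "test_fn UNIV \<phi>" for \<phi>
    proof -
      have "(\<integral>x. u x * partial i \<phi> x \<partial>lebesgue) = - (\<integral>x. g1 x $ i * \<phi> x \<partial>lebesgue)"
        "(\<integral>x. u x * partial i \<phi> x \<partial>lebesgue) = - (\<integral>x. g2 x $ i * \<phi> x \<partial>lebesgue)"
        using g1 g2 that unfolding weak_grad_def by blast+
      then show ?thesis by simp
    qed
  qed (fact weak_grad_component_locally_integrable[OF g1] weak_grad_component_locally_integrable[OF g2])+
  then have "AE x in lebesgue. \<forall>i. g1 x $ i = g2 x $ i"
    unfolding AE_all_countable by blast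
  then show ?thesis
    by eventually_elim (simp add: vec_eq_iff)
qed

lemma weak_grad_grad: "u \<in> D12 \<Longrightarrow> weak_grad u (grad u)"
  unfolding D12_def grad_def by (auto intro: someI[where P = "weak_grad u"])

lemma dir_nonneg: "0 \<le> dir u"
  unfolding dir_def by (rule integral_nonneg_AE) auto

lemma D12_scale:
  assumes "u \<in> D12"
  shows "(\<lambda>x. c * u x) \<in> D12"
proof -
  have "integrable lebesgue (\<lambda>x. \<bar>u x\<bar> powr 6)"
    using assms unfolding D12_def Lp6_def by auto
  from integrable_mult_right[OF this, of "\<bar>c\<bar> powr 6"]
  have "integrable lebesgue (\<lambda>x. \<bar>c * u x\<bar> powr 6)"
    by (simp add: abs_mult powr_mult)
  then show ?thesis
    using assms weak_grad_scale unfolding D12_def Lp6_def by auto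
qed

lemma dir_scale:
  assumes "u \<in> D12"
  shows "dir (\<lambda>x. c * u x) = c\<^sup>2 * dir u"
proof -
  have wg: "weak_grad u (grad u)"
    using assms by (rule weak_grad_grad)
  have "weak_grad (\<lambda>x. c * u x) (grad (\<lambda>x. c * u x))"
    using assms D12_scale by (intro weak_grad_grad)
  then have ae: "AE x in lebesgue. grad (\<lambda>x. c * u x) x = c *\<^sub>R grad u x"
    using weak_grad_scale[OF wg] by (rule weak_grad_unique)
  have [measurable]: "grad u \<in> borel_measurable lebesgue" "grad (\<lambda>x. c * u x) \<in> borel_measurable lebesgue"
    using wg \<open>weak_grad (\<lambda>x. c * u x) _\<close> unfolding weak_grad_def by auto
  have "dir (\<lambda>x. c * u x) = (\<integral>x. (norm (c *\<^sub>R grad u x))\<^sup>2 \<partial>lebesgue)"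
    unfolding dir_def by (rule integral_cong_AE) (use ae in auto)
  then show ?thesis
    by (simp add: dir_def power_mult_distrib)
qed

lemma EV_scale:
  assumes "u \<in> EV V"
  shows "(\<lambda>x. c * u x) \<in> EV V"
proof -
  have "integrable lebesgue (\<lambda>x. c\<^sup>2 * (V x * (u x)\<^sup>2))"
    using assms unfolding EV_def by (intro integrable_mult_right) blast
  then show ?thesis
    using assms D12_scale unfolding EV_def by (simp add: power_mult_distrib algebra_simps)
qed

lemma EE_zscale: "z \<in> EE V W \<Longrightarrow> zscale c z \<in> EE V W"
  unfolding EE_def zscale_def by (auto intro: EV_scale)

section \<open>The functional along rays\<close>

lemma lnorm_sq_expand:
  assumes "\<forall>x. V x \<ge> 0" "\<forall>x. W x \<ge> 0" "lam \<ge> 0"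
  shows "(lnorm V W lam z)\<^sup>2 = dir (fst z) + dir (snd z)
      + lam * (\<integral>x. V x * (fst z x)\<^sup>2 \<partial>lebesgue) + lam * (\<integral>x. W x * (snd z x)\<^sup>2 \<partial>lebesgue)"
    and "0 \<le> lnorm V W lam z"
proof -
  have "0 \<le> (\<integral>x. V x * (fst z x)\<^sup>2 \<partial>lebesgue)" "0 \<le> (\<integral>x. W x * (snd z x)\<^sup>2 \<partial>lebesgue)"
    using assms by (auto intro!: integral_nonneg_AE)
  then have "0 \<le> dir (fst z) + dir (snd z)
      + lam * (\<integral>x. V x * (fst z x)\<^sup>2 \<partial>lebesgue) + lam * (\<integral>x. W x * (snd z x)\<^sup>2 \<partial>lebesgue)"
    using assms(3) dir_nonneg[of "fst z"] dir_nonneg[of "snd z"] by simp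
  then show "(lnorm V W lam z)\<^sup>2 = dir (fst z) + dir (snd z)
      + lam * (\<integral>x. V x * (fst z x)\<^sup>2 \<partial>lebesgue) + lam * (\<integral>x. W x * (snd z x)\<^sup>2 \<partial>lebesgue)"
    and "0 \<le> lnorm V W lam z"
    unfolding lnorm_def by simp_all
qed

lemma dir_le_lnorm_sq:
  assumes "\<forall>x. V x \<ge> 0" "\<forall>x. W x \<ge> 0" "lam \<ge> 0"
  shows "dir (fst z) \<le> (lnorm V W lam z)\<^sup>2" "dir (snd z) \<le> (lnorm V W lam z)\<^sup>2"
proof -
  have "0 \<le> lam * (\<integral>x. V x * (fst z x)\<^sup>2 \<partial>lebesgue)" "0 \<le> lam * (\<integral>x. W x * (snd z x)\<^sup>2 \<partial>lebesgue)"
    using assms by (auto intro!: integral_nonneg_AE)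
  then show "dir (fst z) \<le> (lnorm V W lam z)\<^sup>2" "dir (snd z) \<le> (lnorm V W lam z)\<^sup>2"
    unfolding lnorm_sq_expand(1)[OF assms] using dir_nonneg[of "fst z"] dir_nonneg[of "snd z"] by simp_all
qed

lemma lnorm_zscale:
  assumes "z \<in> EE V W"
  shows "lnorm V W lam (zscale c z) = \<bar>c\<bar> * lnorm V W lam z"
proof -
  have "fst z \<in> D12" "snd z \<in> D12"
    using assms unfolding EE_def EV_def by auto
  moreover have "(\<integral>x. U x * (c * u x)\<^sup>2 \<partial>lebesgue) = c\<^sup>2 * (\<integral>x. U x * (u x)\<^sup>2 \<partial>lebesgue)"
    for U u :: fn3
  proof -
    have "(\<lambda>x. U x * (c * u x)\<^sup>2) = (\<lambda>x. c\<^sup>2 * (U x * (u x)\<^sup>2))"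
      by (simp add: fun_eq_iff power_mult_distrib)
    then show ?thesis by simp
  qed
  ultimately have "lnorm V W lam (zscale c z) = sqrt (c\<^sup>2 * (dir (fst z) + dir (snd z)
      + lam * (\<integral>x. V x * (fst z x)\<^sup>2 \<partial>lebesgue) + lam * (\<integral>x. W x * (snd z x)\<^sup>2 \<partial>lebesgue)))"
    unfolding lnorm_def zscale_def by (simp add: dir_scale distrib_left mult.left_commute)
  then show ?thesis
    unfolding lnorm_def by (simp add: real_sqrt_mult)
qed

definition coupling :: "real \<Rightarrow> real \<Rightarrow> pairfn \<Rightarrow> real" where
  "coupling \<alpha> \<beta> z = (\<integral>x. (max (fst z x) 0) powr \<alpha> * (max (snd z x) 0) powr \<beta> \<partial>lebesgue)"

lemma coupling_zscale:
  assumes "c > 0"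
  shows "coupling \<alpha> \<beta> (zscale c z) = c powr (\<alpha> + \<beta>) * coupling \<alpha> \<beta> z"
proof -
  have max_scale: "max (c * y) 0 = c * max y 0" for y :: real
    using assms by (auto simp: max_def mult_le_0_iff)
  have "(max (c * y) 0) powr \<alpha> * (max (c * w) 0) powr \<beta>
      = c powr (\<alpha> + \<beta>) * ((max y 0) powr \<alpha> * (max w 0) powr \<beta>)" for y w :: real
    using assms by (simp add: max_scale powr_mult powr_add mult_ac)
  then show ?thesis
    unfolding coupling_def zscale_def by simp
qed

lemma JT_zscale:
  assumes "z \<in> EE V W" "c > 0"
  shows "JT \<xi> \<alpha> \<beta> V W T b1 b2 lam (zscale c z) =
      c\<^sup>2 * (lnorm V W lam z)\<^sup>2 / 2
      + \<xi> (c\<^sup>2 * (lnorm V W lam z)\<^sup>2 / T\<^sup>2) * (c ^ 4 * (b1 * (dir (fst z))\<^sup>2 + b2 * (dir (snd z))\<^sup>2)) / 4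
      - c powr (\<alpha> + \<beta>) * coupling \<alpha> \<beta> z / (\<alpha> + \<beta>)"
proof -
  have "fst z \<in> D12" "snd z \<in> D12"
    using assms(1) unfolding EE_def EV_def by auto
  then have "dir (fst (zscale c z)) = c\<^sup>2 * dir (fst z)" "dir (snd (zscale c z)) = c\<^sup>2 * dir (snd z)"
    by (simp_all add: zscale_def dir_scale)
  moreover have "(lnorm V W lam (zscale c z))\<^sup>2 = c\<^sup>2 * (lnorm V W lam z)\<^sup>2"
    using lnorm_zscale[OF assms(1)] by (simp add: power_mult_distrib)
  ultimately show ?thesis
    unfolding JT_def coupling_def[symmetric] coupling_zscale[OF assms(2)]
    by (simp add: power_mult_distrib algebra_simps eval_nat_numeral)
qed

lemma has_real_derivative_along_ray:
  assumes z: "z \<in> EE V W" and F: "is_frechet_deriv V W lam J z L" and pos: "lnorm V W lam z > 0"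
  shows "((\<lambda>t. J (zscale (1 + t) z)) has_real_derivative L z) (at 0)"
proof -
  have hom: "\<And>w c. w \<in> EE V W \<Longrightarrow> L (zscale c w) = c * L w"
    and approx: "\<And>\<epsilon>. \<epsilon> > 0 \<Longrightarrow> \<exists>\<delta>>0. \<forall>w\<in>EE V W. lnorm V W lam w < \<delta> \<longrightarrow>
         \<bar>J (zadd z w) - J z - L w\<bar> \<le> \<epsilon> * lnorm V W lam w"
    using F unfolding is_frechet_deriv_def by blast+
  let ?n = "lnorm V W lam z"
  have "(\<lambda>t. (J (zscale (1 + t) z) - J z) / t) \<midarrow>0\<rightarrow> L z"
    unfolding LIM_eq
  proof (intro allI impI)
    fix r :: real
    assume r: "r > 0"
    obtain \<delta> where \<delta>: "\<delta> > 0" and \<delta>_approx: "\<And>w. w \<in> EE V W \<Longrightarrow> lnorm V W lam w < \<delta> \<Longrightarrow>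
         \<bar>J (zadd z w) - J z - L w\<bar> \<le> (r / (2 * ?n)) * lnorm V W lam w"
      using approx[of "r / (2 * ?n)"] r pos by auto
    show "\<exists>s>0. \<forall>t. t \<noteq> 0 \<and> norm (t - 0) < s \<longrightarrow> norm ((J (zscale (1 + t) z) - J z) / t - L z) < r"
    proof (intro exI[of _ "\<delta> / ?n"] conjI allI impI)
      show "\<delta> / ?n > 0"
        using \<delta> pos by simp
      fix t :: real
      assume t: "t \<noteq> 0 \<and> norm (t - 0) < \<delta> / ?n"
      have ln: "lnorm V W lam (zscale t z) = \<bar>t\<bar> * ?n"
        using lnorm_zscale[OF z] by simp
      moreover have "\<bar>t\<bar> * ?n < \<delta>"
        using t pos by (simp add: field_simps)
      ultimately have "\<bar>J (zadd z (zscale t z)) - J z - L (zscale t z)\<bar> \<le> (r / (2 * ?n)) * (\<bar>t\<bar> * ?n)"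
        using \<delta>_approx[OF EE_zscale[OF z]] by metis
      moreover have "zadd z (zscale t z) = zscale (1 + t) z"
        by (simp add: zadd_def zscale_def algebra_simps)
      ultimately have "\<bar>J (zscale (1 + t) z) - J z - t * L z\<bar> \<le> r / 2 * \<bar>t\<bar>"
        using pos by (simp add: hom[OF z])
      then have "\<bar>(J (zscale (1 + t) z) - J z) / t - L z\<bar> \<le> r / 2"
        using t by (simp add: field_simps abs_divide pos_divide_le_eq)
      then show "norm ((J (zscale (1 + t) z) - J z) / t - L z) < r"
        using r by simp
    qed
  qed
  moreover have "zscale 1 z = z"
    by (simp add: zscale_def)
  ultimately show ?thesis
    by (simp add: has_field_derivative_iff)
qed

lemma abs_le_dual_norm:
  assumes z: "z \<in> EE V W" and F: "is_frechet_deriv V W lam J z L" and pos: "lnorm V W lam z > 0"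
    and nonneg: "\<And>w. 0 \<le> lnorm V W lam w"
  shows "\<bar>L z\<bar> \<le> dual_norm V W lam L * lnorm V W lam z"
proof -
  have hom: "\<And>w c. w \<in> EE V W \<Longrightarrow> L (zscale c w) = c * L w"
    using F unfolding is_frechet_deriv_def by blast
  obtain K where K: "\<And>w. w \<in> EE V W \<Longrightarrow> \<bar>L w\<bar> \<le> K * lnorm V W lam w"
    using F unfolding is_frechet_deriv_def by blast
  let ?n = "lnorm V W lam z"
  let ?w = "zscale (1 / ?n) z"
  have "bdd_above ((\<lambda>w. \<bar>L w\<bar>) ` {w \<in> EE V W. lnorm V W lam w \<le> 1})"
  proof (rule bdd_aboveI2)
    fix w
    assume w: "w \<in> {w \<in> EE V W. lnorm V W lam w \<le> 1}"
    have "\<bar>L w\<bar> \<le> K * lnorm V W lam w"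
      using K w by blast
    also have "\<dots> \<le> \<bar>K\<bar> * lnorm V W lam w"
      using nonneg by (intro mult_right_mono) auto
    also have "\<dots> \<le> \<bar>K\<bar>"
      using w nonneg by (intro mult_left_le) auto
    finally show "\<bar>L w\<bar> \<le> \<bar>K\<bar>" .
  qed
  moreover have "?w \<in> EE V W" "lnorm V W lam ?w = 1"
    using EE_zscale[OF z] lnorm_zscale[OF z] pos by auto
  ultimately have "\<bar>L ?w\<bar> \<le> dual_norm V W lam L"
    unfolding dual_norm_def by (intro cSUP_upper) auto
  moreover have "L ?w = L z / ?n"
    using hom[OF z] by simp
  ultimately show ?thesis
    using pos by (simp add: abs_divide pos_divide_le_eq)
qed

lemma fibering_has_real_derivative:
  fixes \<xi> :: "real \<Rightarrow> real"
  assumes \<xi>: "(\<xi> has_real_derivative \<xi>') (at (N / T\<^sup>2))" and T: "T \<noteq> 0" and s: "s \<noteq> 0"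
  shows "((\<lambda>c. c\<^sup>2 * N / 2 + \<xi> (c\<^sup>2 * N / T\<^sup>2) * (c ^ 4 * B) / 4 - c powr s * P / s)
      has_real_derivative N + \<xi>' * N * B / (2 * T\<^sup>2) + \<xi> (N / T\<^sup>2) * B - P) (at 1)"
proof -
  have "(\<xi> has_real_derivative \<xi>') (at (1\<^sup>2 * N / T\<^sup>2))"
    using \<xi> by simp
  moreover have "((\<lambda>c. c\<^sup>2 * N / T\<^sup>2) has_real_derivative 2 * N / T\<^sup>2) (at 1)"
    using T by (auto intro!: derivative_eq_intros simp: field_simps power2_eq_square eval_nat_numeral)
  ultimately have "((\<lambda>c. \<xi> (c\<^sup>2 * N / T\<^sup>2)) has_real_derivative \<xi>' * (2 * N / T\<^sup>2)) (at 1)"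
    by (rule DERIV_chain2)
  moreover have "((\<lambda>c. c ^ 4 * B) has_real_derivative 4 * B) (at 1)"
    by (auto intro!: derivative_eq_intros)
  ultimately have "((\<lambda>c. \<xi> (c\<^sup>2 * N / T\<^sup>2) * (c ^ 4 * B)) has_real_derivative
      \<xi>' * (2 * N / T\<^sup>2) * (1 ^ 4 * B) + 4 * B * \<xi> (1\<^sup>2 * N / T\<^sup>2)) (at 1)"
    by (rule DERIV_mult)
  from DERIV_cdivide[OF this, of 4]
  have kirchhoff: "((\<lambda>c. \<xi> (c\<^sup>2 * N / T\<^sup>2) * (c ^ 4 * B) / 4) has_real_derivative
      \<xi>' * N * B / (2 * T\<^sup>2) + \<xi> (N / T\<^sup>2) * B) (at 1)"
    by (rule DERIV_cong) (use T in \<open>simp add: field_simps\<close>)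
  have "((\<lambda>c. c\<^sup>2 * N / 2) has_real_derivative N) (at 1)"
    by (auto intro!: derivative_eq_intros)
  from DERIV_add[OF this kirchhoff] have "((\<lambda>c. c\<^sup>2 * N / 2 + \<xi> (c\<^sup>2 * N / T\<^sup>2) * (c ^ 4 * B) / 4)
      has_real_derivative N + \<xi>' * N * B / (2 * T\<^sup>2) + \<xi> (N / T\<^sup>2) * B) (at 1)"
    by (simp add: add.assoc)
  moreover have "((\<lambda>c. c powr s * P / s) has_real_derivative P) (at 1)"
    using s by (auto intro!: derivative_eq_intros)
  ultimately show ?thesis
    by (rule DERIV_diff)
qed

lemma truncated_Kirchhoff_term_le:
  fixes \<xi> :: "real \<Rightarrow> real"
  assumes \<xi>: "\<forall>s\<ge>0. 0 \<le> \<xi> s \<and> \<xi> s \<le> 1" "\<forall>s\<ge>2. \<xi> s = 0"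
    and T: "T > 0" and b: "0 \<le> b1" "0 \<le> b2"
    and a1: "0 \<le> a1" "a1 \<le> N" and a2: "0 \<le> a2" "a2 \<le> N"
  shows "\<xi> (N / T\<^sup>2) * (b1 * a1\<^sup>2 + b2 * a2\<^sup>2) \<le> 4 * (b1 + b2) * T ^ 4"
proof (cases "N / T\<^sup>2 \<ge> 2")
  case True
  then show ?thesis
    using \<xi>(2) b T by simp
next
  case False
  then have "N < 2 * T\<^sup>2"
    using T by (simp add: field_simps)
  then have "N\<^sup>2 \<le> (2 * T\<^sup>2)\<^sup>2"
    using a1 by (intro power_mono) auto
  then have N2: "N\<^sup>2 \<le> 4 * T ^ 4"
    by (simp add: power_mult_distrib flip: power_mult)
  have "b1 * a1\<^sup>2 + b2 * a2\<^sup>2 \<le> b1 * N\<^sup>2 + b2 * N\<^sup>2"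
    using a1 a2 b by (intro add_mono mult_left_mono power_mono) auto
  also have "\<dots> \<le> b1 * (4 * T ^ 4) + b2 * (4 * T ^ 4)"
    using N2 b by (intro add_mono mult_left_mono)
  also have "\<dots> = 4 * (b1 + b2) * T ^ 4"
    by (simp add: algebra_simps)
  finally have "b1 * a1\<^sup>2 + b2 * a2\<^sup>2 \<le> 4 * (b1 + b2) * T ^ 4" .
  moreover have "0 \<le> \<xi> (N / T\<^sup>2)" "\<xi> (N / T\<^sup>2) \<le> 1"
    using \<xi>(1) a1 T by auto
  moreover have "0 \<le> b1 * a1\<^sup>2 + b2 * a2\<^sup>2"
    using b by simp
  ultimately show ?thesis
    by (meson mult_left_le_one_le order_trans)
qed

lemma frechet_deriv_self_eq:
  fixes \<xi> :: "real \<Rightarrow> real" and \<xi>d :: "nat \<Rightarrow> real \<Rightarrow> real"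
  assumes \<xi>: "smooth_real_on_with {0..} \<xi> \<xi>d" and T: "T \<noteq> 0" and s: "\<alpha> + \<beta> \<noteq> 0"
    and z: "z \<in> EE V W" and F: "is_frechet_deriv V W lam (JT \<xi> \<alpha> \<beta> V W T b1 b2 lam) z L"
    and pos: "lnorm V W lam z > 0"
  defines "N \<equiv> (lnorm V W lam z)\<^sup>2" and "B \<equiv> b1 * (dir (fst z))\<^sup>2 + b2 * (dir (snd z))\<^sup>2"
  shows "L z = N + \<xi>d 1 (N / T\<^sup>2) * N * B / (2 * T\<^sup>2) + \<xi> (N / T\<^sup>2) * B - coupling \<alpha> \<beta> z"
proof -
  let ?J = "JT \<xi> \<alpha> \<beta> V W T b1 b2 lam"
  let ?G = "\<lambda>c. c\<^sup>2 * N / 2 + \<xi> (c\<^sup>2 * N / T\<^sup>2) * (c ^ 4 * B) / 4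
      - c powr (\<alpha> + \<beta>) * coupling \<alpha> \<beta> z / (\<alpha> + \<beta>)"
  let ?D = "N + \<xi>d 1 (N / T\<^sup>2) * N * B / (2 * T\<^sup>2) + \<xi> (N / T\<^sup>2) * B - coupling \<alpha> \<beta> z"
  have y: "N / T\<^sup>2 \<in> {0<..}"
    using pos T by (simp add: N_def)
  have "\<forall>k. \<forall>x\<in>{0..}. (\<xi>d k has_real_derivative \<xi>d (Suc k) x) (at x within {0..})"
    using \<xi> unfolding smooth_real_on_with_def by blast
  then have "(\<xi>d 0 has_real_derivative \<xi>d (Suc 0) (N / T\<^sup>2)) (at (N / T\<^sup>2) within {0..})"
    using y by simp
  moreover have "\<xi>d 0 = \<xi>"
    using \<xi> unfolding smooth_real_on_with_def by blast
  moreover have "at (N / T\<^sup>2) within {0..} = at (N / T\<^sup>2)"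
    using y by (intro at_within_interior) simp
  ultimately have "(\<xi> has_real_derivative \<xi>d 1 (N / T\<^sup>2)) (at (N / T\<^sup>2))"
    by simp
  from fibering_has_real_derivative[OF this T s]
  have "(?G has_real_derivative ?D) (at ((\<lambda>t. 1 + t) 0))"
    by simp
  from DERIV_chain2[OF this DERIV_add[OF DERIV_const DERIV_ident]]
  have "((\<lambda>t. ?G (1 + t)) has_real_derivative ?D) (at 0)"
    by simp
  then have "((\<lambda>t. ?J (zscale (1 + t) z)) has_real_derivative ?D) (at 0)"
    by (rule has_field_derivative_transform_within_open[where S="{-1<..}"])
       (auto simp: JT_zscale[OF z] N_def B_def)
  then show ?thesis
    by (rule DERIV_unique[OF has_real_derivative_along_ray[OF z F pos]])
qed

lemma lnorm_sq_le_JT_plus_dual_norm: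
  fixes \<xi> :: "real \<Rightarrow> real" and \<xi>d :: "nat \<Rightarrow> real \<Rightarrow> real"
  assumes V: "\<forall>x. V x \<ge> 0" and W: "\<forall>x. W x \<ge> 0" and lam: "lam \<ge> 0" and T: "T > 0"
    and b: "0 \<le> b1" "0 \<le> b2" and s2: "2 < \<alpha> + \<beta>" and s4: "\<alpha> + \<beta> \<le> 4"
    and \<xi>: "smooth_real_on_with {0..} \<xi> \<xi>d" "\<forall>s\<ge>0. 0 \<le> \<xi> s \<and> \<xi> s \<le> 1" "\<forall>s\<ge>2. \<xi> s = 0"
      "\<forall>s\<ge>0. \<xi>d 1 s \<le> 0"
    and z: "z \<in> EE V W" and F: "is_frechet_deriv V W lam (JT \<xi> \<alpha> \<beta> V W T b1 b2 lam) z L"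
    and pos: "lnorm V W lam z > 0"
  shows "(1/2 - 1/(\<alpha> + \<beta>)) * (lnorm V W lam z)\<^sup>2 \<le> JT \<xi> \<alpha> \<beta> V W T b1 b2 lam z
      + dual_norm V W lam L * lnorm V W lam z / (\<alpha> + \<beta>) + 2 * (b1 + b2) * T ^ 4"
proof -
  define s where "s = \<alpha> + \<beta>"
  define N where "N = (lnorm V W lam z)\<^sup>2"
  define B where "B = b1 * (dir (fst z))\<^sup>2 + b2 * (dir (snd z))\<^sup>2"
  define y where "y = N / T\<^sup>2"
  let ?J = "JT \<xi> \<alpha> \<beta> V W T b1 b2 lam"
  have s0: "s > 0" and N0: "N > 0" and y0: "y > 0" and B0: "B \<ge> 0"
    using s2 pos T b by (auto simp: s_def N_def y_def B_def)
  have Lz: "L z = N + \<xi>d 1 y * N * B / (2 * T\<^sup>2) + \<xi> y * B - coupling \<alpha> \<beta> z"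
    using frechet_deriv_self_eq[OF \<xi>(1) _ _ z F pos] T s2 by (simp add: N_def B_def y_def)
  have Jz: "?J z = N / 2 + \<xi> y * B / 4 - coupling \<alpha> \<beta> z / s"
    by (simp add: JT_def coupling_def N_def B_def y_def s_def)
  have "?J z - L z / s
      = (1/2 - 1/s) * N - (1/s - 1/4) * (\<xi> y * B) - \<xi>d 1 y * N * B / (2 * s * T\<^sup>2)"
    unfolding Lz Jz using s0 T by (simp add: field_simps)
  moreover have "(1/s - 1/4) * (\<xi> y * B) \<le> 1/2 * (4 * (b1 + b2) * T ^ 4)"
  proof (rule mult_mono)
    show "\<xi> y * B \<le> 4 * (b1 + b2) * T ^ 4"
      unfolding y_def B_def
      using truncated_Kirchhoff_term_le[OF \<xi>(2,3) T b] dir_nonneg dir_le_lnorm_sq[OF V W lam]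
      by (simp add: N_def)
  qed (use s2 s4 \<xi>(2) y0 B0 in \<open>auto simp: s_def field_simps\<close>)
  moreover have "0 \<le> - \<xi>d 1 y * N * B / (2 * s * T\<^sup>2)"
    using \<xi>(4) y0 N0 B0 s0 T by (intro divide_nonneg_pos mult_nonneg_nonneg) auto
  moreover have "- L z / s \<le> dual_norm V W lam L * lnorm V W lam z / s"
    using abs_le_dual_norm[OF z F pos lnorm_sq_expand(2)[OF V W lam]] s0
    by (intro divide_right_mono) auto
  ultimately show ?thesis
    unfolding s_def[symmetric] N_def[symmetric] by linarith
qed

lemma frequently_le_if_coercive_estimate:
  fixes l j d :: "nat \<Rightarrow> real"
  assumes j: "j \<longlonglongrightarrow> c" and d: "d \<longlonglongrightarrow> 0" and \<kappa>: "\<kappa> > 0" and T: "T > 0" and s: "s > 0"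
    and gap: "c + r < \<kappa> * T\<^sup>2"
    and estimate: "\<And>n. T < l n \<Longrightarrow> \<kappa> * (l n)\<^sup>2 \<le> j n + d n * l n / s + r"
  shows "\<exists>\<^sub>F n in sequentially. l n \<le> T"
proof (rule ccontr)
  assume "\<not> (\<exists>\<^sub>F n in sequentially. l n \<le> T)"
  then have large: "\<forall>\<^sub>F n in sequentially. T < l n"
    by (simp add: not_frequently not_le)
  define e where "e n = \<bar>d n\<bar> / (\<kappa> * s * T)" for n
  have e: "e \<longlonglongrightarrow> 0"
    unfolding e_def by (intro tendsto_divide_zero tendsto_rabs_zero d)
  have "\<forall>\<^sub>F n in sequentially. \<kappa> * T\<^sup>2 * (1 - e n) \<le> j n + r"
    using large order_tendstoD(2)[OF e zero_less_one]
  proof eventually_elim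
    case (elim n)
    have "d n * l n / s \<le> \<bar>d n\<bar> * l n / s"
      using elim T s by (intro divide_right_mono mult_right_mono) auto
    also have "\<dots> \<le> \<bar>d n\<bar> * ((l n)\<^sup>2 / T) / s"
      using elim T s by (intro divide_right_mono mult_left_mono) (auto simp: field_simps power2_eq_square)
    also have "\<dots> = \<kappa> * e n * (l n)\<^sup>2"
      using \<kappa> T s by (simp add: e_def field_simps)
    finally have "\<kappa> * (l n)\<^sup>2 * (1 - e n) \<le> j n + r"
      using estimate[OF elim(1)] by (simp add: algebra_simps)
    moreover have "\<kappa> * T\<^sup>2 * (1 - e n) \<le> \<kappa> * (l n)\<^sup>2 * (1 - e n)"
      using elim T \<kappa> by (intro mult_right_mono mult_left_mono power_mono) auto
    ultimately show ?case by linarith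
  qed
  moreover have "(\<lambda>n. \<kappa> * T\<^sup>2 * (1 - e n)) \<longlonglongrightarrow> \<kappa> * T\<^sup>2 * (1 - 0)"
    by (intro tendsto_intros e)
  moreover have "(\<lambda>n. j n + r) \<longlonglongrightarrow> c + r"
    by (intro tendsto_intros j)
  ultimately have "\<kappa> * T\<^sup>2 * (1 - 0) \<le> c + r"
    by (intro tendsto_le[OF trivial_limit_sequentially])
  then show False
    using gap by simp
qed

lemma strict_mono_subseq_if_frequently:
  assumes "\<exists>\<^sub>F n in sequentially. P n"
  shows "\<exists>r :: nat \<Rightarrow> nat. strict_mono r \<and> (\<forall>n. P (r n))"
proof -
  have "infinite {n. P n}"
    using assms by (simp add: frequently_cofinite[symmetric] cofinite_eq_sequentially)
  from infinite_enumerate[OF this] show ?thesis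
    by auto
qed

lemma PS_seq_subseq_bounded:
  fixes \<xi> :: "real \<Rightarrow> real" and \<xi>d :: "nat \<Rightarrow> real \<Rightarrow> real"
  assumes V: "\<forall>x. V x \<ge> 0" and W: "\<forall>x. W x \<ge> 0" and lam: "lam \<ge> 0" and T: "T > 0"
    and b: "0 \<le> b1" "0 \<le> b2" and s2: "2 < \<alpha> + \<beta>" and s4: "\<alpha> + \<beta> \<le> 4"
    and \<xi>: "smooth_real_on_with {0..} \<xi> \<xi>d" "\<forall>s\<ge>0. 0 \<le> \<xi> s \<and> \<xi> s \<le> 1" "\<forall>s\<ge>2. \<xi> s = 0"
      "\<forall>s\<ge>0. \<xi>d 1 s \<le> 0"
    and PS: "PS_seq V W lam (JT \<xi> \<alpha> \<beta> V W T b1 b2 lam) c z"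
    and gap: "c + 2 * (b1 + b2) * T ^ 4 < (1/2 - 1/(\<alpha> + \<beta>)) * T\<^sup>2"
  shows "\<exists>r :: nat \<Rightarrow> nat. strict_mono r \<and> (\<forall>n. lnorm V W lam (z (r n)) \<le> T)"
proof -
  obtain L where z: "\<And>n. z n \<in> EE V W" and J: "(\<lambda>n. JT \<xi> \<alpha> \<beta> V W T b1 b2 lam (z n)) \<longlonglongrightarrow> c"
    and F: "\<And>n. is_frechet_deriv V W lam (JT \<xi> \<alpha> \<beta> V W T b1 b2 lam) (z n) (L n)"
    and dual: "(\<lambda>n. dual_norm V W lam (L n)) \<longlonglongrightarrow> 0"
    using PS unfolding PS_seq_def by blast
  have "\<exists>\<^sub>F n in sequentially. lnorm V W lam (z n) \<le> T"
  proof (rule frequently_le_if_coercive_estimate[OF J dual _ T _ gap])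
    show "0 < 1/2 - 1/(\<alpha> + \<beta>)" "0 < \<alpha> + \<beta>"
      using s2 by (auto simp: field_simps)
    show "(1/2 - 1/(\<alpha> + \<beta>)) * (lnorm V W lam (z n))\<^sup>2 \<le> JT \<xi> \<alpha> \<beta> V W T b1 b2 lam (z n)
        + dual_norm V W lam (L n) * lnorm V W lam (z n) / (\<alpha> + \<beta>) + 2 * (b1 + b2) * T ^ 4"
      if "T < lnorm V W lam (z n)" for n
      using that T by (intro lnorm_sq_le_JT_plus_dual_norm[OF V W lam T b s2 s4 \<xi> z F]) simp
  qed
  then show ?thesis
    by (rule strict_mono_subseq_if_frequently)
qed

theorem lemma2p6:
  fixes V W e0 :: fn3 and \<xi> :: "real \<Rightarrow> real" and \<xi>d :: "nat \<Rightarrow> real \<Rightarrow> real"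
    and \<alpha> \<beta> bstar D :: real
  assumes alpha: "\<alpha> > 1" and beta: "\<beta> > 1" and ab4: "\<alpha> + \<beta> \<le> 4"
    and H1_V: "continuous_on UNIV V" "\<forall>x. V x \<ge> 0"
    and H1_W: "continuous_on UNIV W" "\<forall>x. W x \<ge> 0"
    and H1_O1: "smooth_boundary (interior (V -` {0}))" "closure (interior (V -` {0})) = V -` {0}"
    and H1_O2: "smooth_boundary (interior (W -` {0}))" "closure (interior (W -` {0})) = W -` {0}"
    and H1_int: "interior (V -` {0}) \<inter> interior (W -` {0}) \<noteq> {}"
    and H2: "\<exists>c>0. emeasure lebesgue {x. V x * W x \<le> c\<^sup>2} < \<infinity> \<and>
                     emeasure lebesgue {x. V x * W x \<le> c\<^sup>2} > 0"
    and xi: "smooth_real_on_with {0..} \<xi> \<xi>d"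
      "\<forall>s\<ge>0. 0 \<le> \<xi> s \<and> \<xi> s \<le> 1" "\<forall>s\<in>{0..1}. \<xi> s = 1" "\<forall>s\<ge>2. \<xi> s = 0"
      "\<forall>s\<ge>0. \<xi>d 1 s \<le> 0" "\<forall>s\<ge>0. \<bar>\<xi>d 1 s\<bar> \<le> 2"
    and e0: "test_fn (interior (V -` {0}) \<inter> interior (W -` {0})) e0" "\<exists>x. e0 x > 0"
    and bstar: "bstar > 0"
    and e0neg: "\<forall>T>0. \<forall>lam>0. \<forall>b1>0. \<forall>b2>0. b1 + b2 < bstar \<longrightarrow>
                  JT \<xi> \<alpha> \<beta> V W T b1 b2 lam (e0, e0) < 0"
    and D: "D > 0"
    and cD: "\<forall>lam\<ge>1. \<forall>T>0. \<forall>b1>0. \<forall>b2>0. b1 + b2 < bstar \<longrightarrow>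
                  cT \<xi> \<alpha> \<beta> V W e0 T b1 b2 lam \<le> D"
  shows "\<exists>bs. 0 < bs \<and> bs < bstar \<and>
     (\<forall>lam\<ge>1. \<forall>b1>0. \<forall>b2>0. b1 + b2 < bs \<longrightarrow>
        (let T = sqrt (2 * (\<alpha> + \<beta>) * (D + 1) / (\<alpha> + \<beta> - 2)) in
         \<forall>z. PS_seq V W lam (JT \<xi> \<alpha> \<beta> V W T b1 b2 lam) (cT \<xi> \<alpha> \<beta> V W e0 T b1 b2 lam) z \<longrightarrow>
            (\<exists>r :: nat \<Rightarrow> nat. strict_mono r \<and> (\<forall>n. lnorm V W lam (z (r n)) \<le> T))))"
proof -
  (* Only V, W >= 0, the properties of xi and the bound on the mountain-pass level enter here;
     the remaining hypotheses are what makes that bound available. *)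
  define T where "T = sqrt (2 * (\<alpha> + \<beta>) * (D + 1) / (\<alpha> + \<beta> - 2))"
  have s2: "2 < \<alpha> + \<beta>"
    using alpha beta by simp
  have "0 < 2 * (\<alpha> + \<beta>) * (D + 1) / (\<alpha> + \<beta> - 2)"
    using s2 D by (intro divide_pos_pos mult_pos_pos) auto
  then have T: "T > 0" and "T\<^sup>2 = 2 * (\<alpha> + \<beta>) * (D + 1) / (\<alpha> + \<beta> - 2)"
    by (simp_all add: T_def)
  then have threshold: "(1/2 - 1/(\<alpha> + \<beta>)) * T\<^sup>2 = D + 1"
    using s2 by (simp add: field_simps)
  define bs where "bs = min (bstar / 2) (1 / (8 * T ^ 4))"
  have "0 < bs" "bs < bstar"
    using bstar T by (auto simp: bs_def)
  moreover have "\<exists>r :: nat \<Rightarrow> nat. strict_mono r \<and> (\<forall>n. lnorm V W lam (z (r n)) \<le> T)"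
    if "lam \<ge> 1" "b1 > 0" "b2 > 0" "b1 + b2 < bs"
      and "PS_seq V W lam (JT \<xi> \<alpha> \<beta> V W T b1 b2 lam) (cT \<xi> \<alpha> \<beta> V W e0 T b1 b2 lam) z"
    for lam b1 b2 z
  proof (rule PS_seq_subseq_bounded[OF H1_V(2) H1_W(2) _ T _ _ s2 ab4 xi(1,2,4,5) that(5)])
    have "cT \<xi> \<alpha> \<beta> V W e0 T b1 b2 lam \<le> D"
      using cD that T \<open>bs < bstar\<close> by auto
    moreover have "2 * (b1 + b2) * T ^ 4 \<le> 1/4"
      using that(4) T by (simp add: bs_def field_simps)
    ultimately show "cT \<xi> \<alpha> \<beta> V W e0 T b1 b2 lam + 2 * (b1 + b2) * T ^ 4 < (1/2 - 1/(\<alpha> + \<beta>)) * T\<^sup>2"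
      using threshold by linarith
  qed (use that in auto)
  ultimately show ?thesis
    unfolding Let_def T_def[symmetric] by blast
qed

end
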